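(* Let $\mathbf A\in\mathbb C^{m\times n}$, $\mathbf B\in\mathbb C^{m\times s}$, let $\mathbf X_{LS}=(x_{ij})\in\mathbb C^{n\times s}$ be the minimum norm least squares solution of $\mathbf A\mathbf X=\mathbf B$, and let $\hat{\mathbf B}=\mathbf A^{*}\mathbf B$ with $j$-th column $\hat{\mathbf b}_{.j}$. (i) If $\operatorname{rank}\mathbf A=r\le m<n$, then for all $i=1,\dots,n$, $j=1,\dots,s$, \[x_{ij}=\frac{\sum_{\beta\in J_{r,n}\{i\}}\left|\left((\mathbf A^{*}\mathbf A)_{.i}(\hat{\mathbf b}_{.j})\right)^{\beta}_{\beta}\right|}{\sum_{\beta\in J_{r,n}}\left|(\mathbf A^{*}\mathbf A)^{\beta}_{\beta}\right|}.\] (ii) If $\operatorname{rank}\mathbf A=n$, then for all $i=1,\dots,n$, $j=1,\dots,s$, $x_{ij}=\dfrac{\det\left((\mathbf A^{*}\mathbf A)_{.i}(\hat{\mathbf b}_{.j})\right)}{\det(\mathbf A^{*}\mathbf A)}$.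
   Context: $\mathbf X_{LS}$ is the matrix of minimal Frobenius norm among all $\mathbf X\in\mathbb C^{n\times s}$ minimizing the Frobenius norm $\|\mathbf A\mathbf X-\mathbf B\|$. $\mathbf M_{.i}(\mathbf c)$ denotes $\mathbf M$ with its $i$-th column replaced by $\mathbf c$. $J_{r,n}$ is the set of strictly increasing sequences of $r$ elements of $\{1,\dots,n\}$, $J_{r,n}\{i\}=\{\beta\in J_{r,n}:i\in\beta\}$, $\mathbf M^{\beta}_{\beta}$ is the principal submatrix indexed by $\beta$, $|\cdot|$ is the determinant. *)

theory Defs
  imports Complex_Main "Jordan_Normal_Form.Schur_Decomposition" "Jordan_Normal_Form.DL_Rank"
    "Jordan_Normal_Form.DL_Submatrix"
begin

definition frob_norm :: "complex mat \<Rightarrow> real" where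
  "frob_norm M = sqrt (\<Sum>i<dim_row M. \<Sum>j<dim_col M. (cmod (M $$ (i,j)))^2)"

definition min_norm_ls :: "complex mat \<Rightarrow> complex mat \<Rightarrow> complex mat \<Rightarrow> bool" where
  "min_norm_ls A B X \<longleftrightarrow>
     X \<in> carrier_mat (dim_col A) (dim_col B) \<and>
     (\<forall>Y \<in> carrier_mat (dim_col A) (dim_col B). frob_norm (A * X - B) \<le> frob_norm (A * Y - B)) \<and>
     (\<forall>Y \<in> carrier_mat (dim_col A) (dim_col B).
        frob_norm (A * Y - B) = frob_norm (A * X - B) \<longrightarrow> frob_norm X \<le> frob_norm Y)"

text \<open>J_{r,n} as sets of r indices from {0..<n} (0-based); J_{r,n}{i} those containing i.\<close>
definition J_set :: "nat \<Rightarrow> nat \<Rightarrow> nat set set" where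
  "J_set r n = {\<beta>. \<beta> \<subseteq> {0..<n} \<and> card \<beta> = r}"

definition J_set_i :: "nat \<Rightarrow> nat \<Rightarrow> nat \<Rightarrow> nat set set" where
  "J_set_i r n i = {\<beta> \<in> J_set r n. i \<in> \<beta>}"

end

theory Submission
  imports Defs
begin

text \<open>Every column x of X is a solution of the normal equations (A^*A) x = A^*b that is
  orthogonal to the kernel of A. Cramer's rule for the regularised system
  (A^*A + z I) x = A^*b + z x, with both determinants expanded in principal minors, yields a
  polynomial identity in z. A principal minor of order greater than r = rank A of A^*A, or of
  A^*A with its i-th column replaced by A^*b or by x, vanishes: r + 1 columns of A admit a
  nontrivial relation w, and every column of these matrices is orthogonal to w. Comparing the
  coefficients of z^(n - r) gives the formula; its denominator is a sum of nonnegative principal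
  minors of the Gram matrix A^*A, one of which is positive.\<close>

section \<open>Determinants of principal submatrices\<close>

definition det_on :: "nat set \<Rightarrow> (nat \<Rightarrow> nat \<Rightarrow> 'a::comm_ring_1) \<Rightarrow> 'a" where
  "det_on S f = (\<Sum>p | p permutes S. of_int (sign p) * (\<Prod>i\<in>S. f i (p i)))"

lemma det_on_cong:
  "(\<And>i j. i \<in> S \<Longrightarrow> j \<in> S \<Longrightarrow> f i j = g i j) \<Longrightarrow> det_on S f = det_on S g"
  unfolding det_on_def
  by (intro sum.cong refl arg_cong[where f = "(*) _"] prod.cong) (auto simp: permutes_in_image)

lemma det_eq_det_on:
  assumes "M \<in> carrier_mat n n"
  shows "det M = det_on {0..<n} (\<lambda>i j. M $$ (i,j))"
  unfolding det_def'[OF assms] det_on_def by simp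

lemma det_on_add_diag:
  fixes f :: "nat \<Rightarrow> nat \<Rightarrow> 'a::comm_ring_1"
  assumes U: "finite U"
  shows "det_on U (\<lambda>i j. f i j + (if i = j then t i else 0))
     = (\<Sum>\<beta>\<in>Pow U. (\<Prod>k\<in>U-\<beta>. t k) * det_on \<beta> f)"
proof -
  have "det_on U (\<lambda>i j. f i j + (if i = j then t i else 0))
    = (\<Sum>p | p permutes U. of_int (sign p) *
         (\<Sum>\<beta>\<in>Pow U. (\<Prod>i\<in>\<beta>. f i (p i)) * (\<Prod>i\<in>U-\<beta>. if i = p i then t i else 0)))"
    unfolding det_on_def by (simp add: prod_add[OF U])
  also have "\<dots> = (\<Sum>\<beta>\<in>Pow U. \<Sum>p | p permutes U. of_int (sign p) *
         ((\<Prod>i\<in>\<beta>. f i (p i)) * (\<Prod>i\<in>U-\<beta>. if i = p i then t i else 0)))"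
    by (simp add: sum_distrib_left sum.swap[of _ "Pow U"])
  also have "\<dots> = (\<Sum>\<beta>\<in>Pow U. (\<Prod>k\<in>U-\<beta>. t k) * det_on \<beta> f)"
  proof (rule sum.cong[OF refl])
    fix \<beta> assume b: "\<beta> \<in> Pow U"
    \<comment> \<open>only permutations fixing every point outside \<open>\<beta>\<close> contribute\<close>
    have "(\<Sum>p | p permutes U. of_int (sign p) *
         ((\<Prod>i\<in>\<beta>. f i (p i)) * (\<Prod>i\<in>U-\<beta>. if i = p i then t i else 0)))
       = (\<Sum>p | p permutes \<beta>. (\<Prod>k\<in>U-\<beta>. t k) * (of_int (sign p) * (\<Prod>i\<in>\<beta>. f i (p i))))"
    proof (rule sum.mono_neutral_cong_right)
      show "finite {p. p permutes U}" using finite_permutations[OF U] by simp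
      show "{p. p permutes \<beta>} \<subseteq> {p. p permutes U}" using b permutes_subset by blast
      show "\<forall>p \<in> {p. p permutes U} - {p. p permutes \<beta>}. of_int (sign p) *
          ((\<Prod>i\<in>\<beta>. f i (p i)) * (\<Prod>i\<in>U-\<beta>. if i = p i then t i else 0)) = 0"
      proof
        fix p assume p: "p \<in> {p. p permutes U} - {p. p permutes \<beta>}"
        then obtain x where x: "x \<in> U - \<beta>" "p x \<noteq> x" using permutes_superset by blast
        have "(\<Prod>i\<in>U-\<beta>. if i = p i then t i else 0) = 0"
          using U x by (intro prod_zero) (auto intro!: bexI[of _ x])
        then show "of_int (sign p) * ((\<Prod>i\<in>\<beta>. f i (p i)) *
          (\<Prod>i\<in>U-\<beta>. if i = p i then t i else 0)) = 0" by simp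
      qed
      show "of_int (sign p) * ((\<Prod>i\<in>\<beta>. f i (p i)) * (\<Prod>i\<in>U-\<beta>. if i = p i then t i else 0))
          = (\<Prod>k\<in>U-\<beta>. t k) * (of_int (sign p) * (\<Prod>i\<in>\<beta>. f i (p i)))"
        if p: "p \<in> {p. p permutes \<beta>}" for p
      proof -
        have "(\<Prod>i\<in>U-\<beta>. if i = p i then t i else 0) = (\<Prod>k\<in>U-\<beta>. t k)"
          by (rule prod.cong) (use p in \<open>auto simp: permutes_not_in\<close>)
        then show ?thesis by (simp add: ac_simps)
      qed
    qed
    then show "(\<Sum>p | p permutes U. of_int (sign p) *
         ((\<Prod>i\<in>\<beta>. f i (p i)) * (\<Prod>i\<in>U-\<beta>. if i = p i then t i else 0)))
       = (\<Prod>k\<in>U-\<beta>. t k) * det_on \<beta> f"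
      unfolding det_on_def by (simp add: sum_distrib_left)
  qed
  finally show ?thesis .
qed

lemma det_on_add_scalar_diag:
  "det_on {0..<n} (\<lambda>a b. f a b + (if a = b then z else 0))
    = (\<Sum>\<beta>\<in>Pow {0..<n}. z ^ (n - card \<beta>) * det_on \<beta> f)"
  unfolding det_on_add_diag[OF finite_atLeastLessThan]
proof (rule sum.cong[OF refl])
  fix \<beta> assume "\<beta> \<in> Pow {0..<n}"
  then have "card ({0..<n} - \<beta>) = n - card \<beta>"
    by (subst card_Diff_subset) (auto intro: finite_subset)
  then show "(\<Prod>k\<in>{0..<n} - \<beta>. z) * det_on \<beta> f = z ^ (n - card \<beta>) * det_on \<beta> f"
    by simp
qed

lemma det_on_replace_col_add_scalar_diag:
  assumes i: "i < n"
  shows "det_on {0..<n} (\<lambda>a b. if b = i then y a else f a b + (if a = b then z else 0))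
    = (\<Sum>\<beta>\<in>Pow {0..<n}. z ^ (n - card \<beta>) *
        (if i \<in> \<beta> then det_on \<beta> (\<lambda>a b. if b = i then y a else f a b) else 0))"
proof -
  define t where "t = (\<lambda>a. if a = i then 0 else z)"
  have "det_on {0..<n} (\<lambda>a b. if b = i then y a else f a b + (if a = b then z else 0))
      = det_on {0..<n} (\<lambda>a b. (if b = i then y a else f a b) + (if a = b then t a else 0))"
    by (rule det_on_cong) (auto simp: t_def)
  also have "\<dots> = (\<Sum>\<beta>\<in>Pow {0..<n}. (\<Prod>k\<in>{0..<n} - \<beta>. t k) *
      det_on \<beta> (\<lambda>a b. if b = i then y a else f a b))"
    by (rule det_on_add_diag[OF finite_atLeastLessThan])
  also have "\<dots> = (\<Sum>\<beta>\<in>Pow {0..<n}. z ^ (n - card \<beta>) *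
      (if i \<in> \<beta> then det_on \<beta> (\<lambda>a b. if b = i then y a else f a b) else 0))"
  proof (rule sum.cong[OF refl])
    fix \<beta> assume b: "\<beta> \<in> Pow {0..<n}"
    show "(\<Prod>k\<in>{0..<n} - \<beta>. t k) * det_on \<beta> (\<lambda>a b. if b = i then y a else f a b)
      = z ^ (n - card \<beta>) * (if i \<in> \<beta> then det_on \<beta> (\<lambda>a b. if b = i then y a else f a b) else 0)"
    proof (cases "i \<in> \<beta>")
      case True
      have "(\<Prod>k\<in>{0..<n} - \<beta>. t k) = (\<Prod>k\<in>{0..<n} - \<beta>. z)"
        using True by (intro prod.cong) (auto simp: t_def)
      also have "\<dots> = z ^ (n - card \<beta>)"
        using b by (simp, subst card_Diff_subset) (auto intro: finite_subset)
      finally show ?thesis using True by simp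
    next
      case False
      have "(\<Prod>k\<in>{0..<n} - \<beta>. t k) = 0"
        using False i by (intro prod_zero) (auto simp: t_def intro!: bexI[of _ i])
      then show ?thesis using False by simp
    qed
  qed
  finally show ?thesis .
qed

lemma det_on_linear_col:
  fixes f :: "nat \<Rightarrow> nat \<Rightarrow> 'a::comm_ring_1"
  assumes U: "finite U" and i: "i \<in> U"
  shows "det_on U (\<lambda>j k. if k = i then a j + c * b j else f j k)
    = det_on U (\<lambda>j k. if k = i then a j else f j k) + c * det_on U (\<lambda>j k. if k = i then b j else f j k)"
proof -
  have key: "(\<Prod>j\<in>U. (if p j = i then a j + c * b j else f j (p j)))
     = (\<Prod>j\<in>U. (if p j = i then a j else f j (p j))) + c * (\<Prod>j\<in>U. (if p j = i then b j else f j (p j)))"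
    if p: "p permutes U" for p
  proof -
    obtain j0 where j0: "j0 \<in> U" "p j0 = i"
      using p i permutes_image[OF p] by (metis imageE)
    have ne: "p j \<noteq> i" if "j \<in> U - {j0}" for j
      using that j0 p by (metis DiffE insertCI permutes_inj injD)
    have R: "(\<Prod>j\<in>U. (if p j = i then g j else f j (p j))) = g j0 * (\<Prod>j\<in>U-{j0}. f j (p j))" for g
    proof -
      have "(\<Prod>j\<in>U. (if p j = i then g j else f j (p j))) =
            (if p j0 = i then g j0 else f j0 (p j0)) * (\<Prod>j\<in>U-{j0}. (if p j = i then g j else f j (p j)))"
        by (rule prod.remove[OF U j0(1)])
      also have "(\<Prod>j\<in>U-{j0}. (if p j = i then g j else f j (p j))) = (\<Prod>j\<in>U-{j0}. f j (p j))"
        by (rule prod.cong) (use ne in auto)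
      finally show ?thesis using j0 by simp
    qed
    show ?thesis unfolding R by (simp add: algebra_simps)
  qed
  show ?thesis unfolding det_on_def
    by (subst sum.cong[OF refl, of _ _ "\<lambda>p. of_int (sign p) * (\<Prod>j\<in>U. (if p j = i then a j else f j (p j)))
      + c * (of_int (sign p) * (\<Prod>j\<in>U. (if p j = i then b j else f j (p j))))"])
      (auto simp: key sum.distrib sum_distrib_left algebra_simps)
qed

lemma bij_betw_pick:
  assumes S: "finite S"
  shows "bij_betw (pick S) {0..<card S} S"
  unfolding bij_betw_def
proof
  show "inj_on (pick S) {0..<card S}"
    by (auto simp: inj_on_def) (metis nat_neq_iff pick_mono_le)
  show "pick S ` {0..<card S} = S"
  proof
    show "pick S ` {0..<card S} \<subseteq> S" using pick_in_set_le by auto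
    show "S \<subseteq> pick S ` {0..<card S}"
    proof
      fix s assume s: "s \<in> S"
      have "{a\<in>S. a < s} \<subset> S" using s by auto
      then have "card {a\<in>S. a < s} < card S" by (rule psubset_card_mono[OF S])
      moreover have "pick S (card {a\<in>S. a < s}) = s" by (rule pick_card_in_set[OF s])
      ultimately show "s \<in> pick S ` {0..<card S}"
        by (intro image_eqI[of _ _ "card {a\<in>S. a < s}"]) auto
    qed
  qed
qed

lemma card_less_and_mem: "S \<subseteq> {0..<n} \<Longrightarrow> card {i. i < n \<and> i \<in> S} = card S"
  by (rule arg_cong[of _ _ card]) auto

lemma submatrix_carrier_mat:
  "A \<in> carrier_mat m n \<Longrightarrow> S \<subseteq> {0..<n} \<Longrightarrow> submatrix A UNIV S \<in> carrier_mat m (card S)"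
  "A \<in> carrier_mat n n \<Longrightarrow> S \<subseteq> {0..<n} \<Longrightarrow> submatrix A S S \<in> carrier_mat (card S) (card S)"
  by (auto simp: dim_submatrix card_less_and_mem)

lemma bij_betw_map_permutation:
  assumes bij: "bij_betw f A B"
  shows "bij_betw (map_permutation A f) {p. p permutes A} {p. p permutes B}"
proof (rule bij_betw_byWitness[where f' = "map_permutation B (inv_into A f)"])
  have bij': "bij_betw (inv_into A f) B A" by (rule bij_betw_inv_into[OF bij])
  show "\<forall>p\<in>{p. p permutes A}. map_permutation B (inv_into A f) (map_permutation A f p) = p"
    by (auto intro!: map_permutation_compose_inv[OF bij] bij_betw_inv_into_left[OF bij])
  show "\<forall>p\<in>{p. p permutes B}. map_permutation A f (map_permutation B (inv_into A f) p) = p"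
    by (auto intro!: map_permutation_compose_inv[OF bij'] bij_betw_inv_into_right[OF bij])
  show "map_permutation A f ` {p. p permutes A} \<subseteq> {p. p permutes B}"
    using map_permutation_permutes[OF bij] by auto
  show "map_permutation B (inv_into A f) ` {p. p permutes B} \<subseteq> {p. p permutes A}"
    using map_permutation_permutes[OF bij'] by auto
qed

lemma det_submatrix_eq_det_on:
  fixes M :: "'a::comm_ring_1 mat"
  assumes M: "M \<in> carrier_mat n n" and S: "S \<subseteq> {0..<n}"
  shows "det (submatrix M S S) = det_on S (\<lambda>i j. M $$ (i,j))"
proof -
  define k where "k = card S"
  have ck: "card {i. i < n \<and> i \<in> S} = k" unfolding k_def by (rule card_less_and_mem[OF S])
  have dims: "dim_row M = n" "dim_col M = n" using M by auto
  have sub: "submatrix M S S \<in> carrier_mat k k"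
    unfolding k_def by (rule submatrix_carrier_mat(2)[OF M S])
  have bij: "bij_betw (pick S) {0..<k} S"
    unfolding k_def by (rule bij_betw_pick[OF finite_subset[OF S finite_atLeastLessThan]])
  then have inj: "inj_on (pick S) {0..<k}" by (rule bij_betw_imp_inj_on)
  define h where "h = map_permutation {0..<k} (pick S)"
  have hbij: "bij_betw h {q. q permutes {0..<k}} {p. p permutes S}"
    unfolding h_def by (rule bij_betw_map_permutation[OF bij])
  have "det (submatrix M S S) = (\<Sum>q | q permutes {0..<k}. of_int (sign q) *
          (\<Prod>i=0..<k. M $$ (pick S i, pick S (q i))))"
    unfolding det_def'[OF sub]
  proof (rule sum.cong[OF refl], rule arg_cong[where f = "(*) _"], rule prod.cong[OF refl])
    fix q i assume q: "q \<in> {q. q permutes {0..<k}}" and i: "i \<in> {0..<k}"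
    have "q i < k" using q i permutes_in_image by fastforce
    then show "submatrix M S S $$ (i, q i) = M $$ (pick S i, pick S (q i))"
      using i by (subst submatrix_index) (auto simp: ck dims)
  qed
  also have "\<dots> = (\<Sum>q | q permutes {0..<k}. of_int (sign (h q)) * (\<Prod>s\<in>S. M $$ (s, h q s)))"
  proof (rule sum.cong[OF refl])
    fix q assume q: "q \<in> {q. q permutes {0..<k}}"
    have sg: "sign (h q) = sign q" unfolding h_def
      by (rule sign_map_permutation[OF inj]) (use q in auto)
    have "(\<Prod>s\<in>S. M $$ (s, h q s)) = (\<Prod>i\<in>{0..<k}. M $$ (pick S i, h q (pick S i)))"
      by (rule prod.reindex_bij_betw[OF bij, symmetric])
    also have "\<dots> = (\<Prod>i\<in>{0..<k}. M $$ (pick S i, pick S (q i)))"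
      unfolding h_def by (rule prod.cong[OF refl]) (simp add: map_permutation_apply[OF inj])
    finally show "of_int (sign q) * (\<Prod>i=0..<k. M $$ (pick S i, pick S (q i)))
       = of_int (sign (h q)) * (\<Prod>s\<in>S. M $$ (s, h q s))" using sg by simp
  qed
  also have "\<dots> = det_on S (\<lambda>i j. M $$ (i,j))"
    unfolding det_on_def by (rule sum.reindex_bij_betw[OF hbij])
  finally show ?thesis .
qed

lemma replace_col_carrier: "A \<in> carrier_mat n n \<Longrightarrow> replace_col A v i \<in> carrier_mat n n"
  unfolding replace_col_def by auto

lemma replace_col_index:
  "A \<in> carrier_mat n n \<Longrightarrow> a < n \<Longrightarrow> b < n \<Longrightarrow>
    replace_col A v i $$ (a,b) = (if b = i then v $ a else A $$ (a,b))"
  unfolding replace_col_def by auto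

lemma det_submatrix_replace_col:
  assumes N: "N \<in> carrier_mat n n" and S: "S \<subseteq> {0..<n}"
  shows "det (submatrix (replace_col N y i) S S) = det_on S (\<lambda>a b. if b = i then y $ a else N $$ (a,b))"
  unfolding det_submatrix_eq_det_on[OF replace_col_carrier[OF N] S]
proof (rule det_on_cong)
  fix a b assume "a \<in> S" "b \<in> S"
  then have "a < n" "b < n" using S by auto
  then show "replace_col N y i $$ (a,b) = (if b = i then y $ a else N $$ (a,b))"
    by (rule replace_col_index[OF N])
qed

section \<open>Cramer's rule in terms of principal minors\<close>

lemma cramer_add_scalar_diag:
  assumes N: "N \<in> carrier_mat n n" and x: "x \<in> carrier_vec n" and i: "i < n"
  shows "x $ i * (\<Sum>\<beta>\<in>Pow {0..<n}. z ^ (n - card \<beta>) * det_on \<beta> (\<lambda>a b. N $$ (a,b)))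
    = (\<Sum>\<beta>\<in>Pow {0..<n}. z ^ (n - card \<beta>) *
        (if i \<in> \<beta> then det_on \<beta> (\<lambda>a b. if b = i then (N *\<^sub>v x) $ a else N $$ (a,b)) else 0))
      + z * (\<Sum>\<beta>\<in>Pow {0..<n}. z ^ (n - card \<beta>) *
        (if i \<in> \<beta> then det_on \<beta> (\<lambda>a b. if b = i then x $ a else N $$ (a,b)) else 0))"
proof -
  define M where "M = mat n n (\<lambda>(a,b). N $$ (a,b) + (if a = b then z else 0))"
  have M: "M \<in> carrier_mat n n" unfolding M_def by simp
  have Mx: "(M *\<^sub>v x) $ a = (N *\<^sub>v x) $ a + z * x $ a" if a: "a < n" for a
  proof -
    have "(M *\<^sub>v x) $ a = (N *\<^sub>v x) $ a + (\<Sum>k\<in>{0..<n}. (if a = k then z else 0) * x $ k)"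
      using a x N unfolding M_def by (auto simp: scalar_prod_def distrib_right sum.distrib)
    also have "(\<Sum>k\<in>{0..<n}. (if a = k then z else 0) * x $ k) = (\<Sum>k\<in>{0..<n}. if a = k then z * x $ k else 0)"
      by (rule sum.cong) auto
    finally show ?thesis using a by simp
  qed
  have "x $ i * det M = det (replace_col M (M *\<^sub>v x) i)"
    by (rule cramer_lemma_mat[OF M x i, symmetric])
  also have "\<dots> = det_on {0..<n} (\<lambda>a b. if b = i then (N *\<^sub>v x) $ a + z * x $ a
      else N $$ (a,b) + (if a = b then z else 0))"
    unfolding det_eq_det_on[OF replace_col_carrier[OF M]]
  proof (rule det_on_cong)
    fix a b assume "a \<in> {0..<n}" "b \<in> {0..<n}"
    then have ab: "a < n" "b < n" by auto
    then have "M $$ (a,b) = N $$ (a,b) + (if a = b then z else 0)" by (simp add: M_def)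
    then show "replace_col M (M *\<^sub>v x) i $$ (a,b) = (if b = i then (N *\<^sub>v x) $ a + z * x $ a
      else N $$ (a,b) + (if a = b then z else 0))"
      unfolding replace_col_index[OF M ab] using Mx[OF ab(1)] by simp
  qed
  also have "\<dots> = det_on {0..<n} (\<lambda>a b. if b = i then (N *\<^sub>v x) $ a else N $$ (a,b) + (if a = b then z else 0))
      + z * det_on {0..<n} (\<lambda>a b. if b = i then x $ a else N $$ (a,b) + (if a = b then z else 0))"
    by (rule det_on_linear_col) (use i in auto)
  finally have "x $ i * det M = \<dots>" .
  moreover have "det M = (\<Sum>\<beta>\<in>Pow {0..<n}. z ^ (n - card \<beta>) * det_on \<beta> (\<lambda>a b. N $$ (a,b)))"
    unfolding det_eq_det_on[OF M] det_on_add_scalar_diag[symmetric]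
    by (rule det_on_cong) (simp add: M_def)
  ultimately show ?thesis unfolding det_on_replace_col_add_scalar_diag[OF i] by simp
qed

lemma continuous_vanishing_off_point:
  fixes f :: "'a::{perfect_space,t2_space} \<Rightarrow> 'b::t2_space"
  assumes "\<And>z. z \<noteq> a \<Longrightarrow> f z = c" and "isCont f a"
  shows "f a = c"
proof -
  have "eventually (\<lambda>z. c = f z) (at a)"
    using assms(1) by (simp add: eventually_at_filter)
  then have "(f \<longlongrightarrow> c) (at a)" by (rule Lim_transform_eventually[OF tendsto_const])
  then show ?thesis using assms(2) tendsto_unique[OF at_neq_bot] unfolding isCont_def by blast
qed

lemma lowest_order_terms_eq:
  fixes D E F :: "nat set \<Rightarrow> complex"
  assumes rn: "r \<le> n"
    and vanish: "\<And>\<beta>. \<beta> \<subseteq> {0..<n} \<Longrightarrow> r < card \<beta> \<Longrightarrow> D \<beta> = 0 \<and> E \<beta> = 0 \<and> F \<beta> = 0"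
    and ident: "\<And>z. a * (\<Sum>\<beta>\<in>Pow {0..<n}. z ^ (n - card \<beta>) * D \<beta>)
      = (\<Sum>\<beta>\<in>Pow {0..<n}. z ^ (n - card \<beta>) * E \<beta>) + z * (\<Sum>\<beta>\<in>Pow {0..<n}. z ^ (n - card \<beta>) * F \<beta>)"
  shows "a * (\<Sum>\<beta>\<in>J_set r n. D \<beta>) = (\<Sum>\<beta>\<in>J_set r n. E \<beta>)"
proof -
  define P where "P = {\<beta>\<in>Pow {0..<n}. card \<beta> \<le> r}"
  have finP: "finite P" unfolding P_def by simp
  have factor: "(\<Sum>\<beta>\<in>Pow {0..<n}. z ^ (n - card \<beta>) * G \<beta>) = z ^ (n - r) * (\<Sum>\<beta>\<in>P. z ^ (r - card \<beta>) * G \<beta>)"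
    if van: "\<And>\<beta>. \<beta> \<subseteq> {0..<n} \<Longrightarrow> r < card \<beta> \<Longrightarrow> G \<beta> = 0" for G :: "nat set \<Rightarrow> complex" and z
  proof -
    have "(\<Sum>\<beta>\<in>Pow {0..<n}. z ^ (n - card \<beta>) * G \<beta>) = (\<Sum>\<beta>\<in>P. z ^ (n - card \<beta>) * G \<beta>)"
      by (rule sum.mono_neutral_right) (auto simp: P_def van)
    also have "\<dots> = (\<Sum>\<beta>\<in>P. z ^ (n - r) * (z ^ (r - card \<beta>) * G \<beta>))"
    proof (rule sum.cong[OF refl])
      fix \<beta> assume "\<beta> \<in> P"
      then have "n - card \<beta> = (n - r) + (r - card \<beta>)" using rn unfolding P_def by auto
      then show "z ^ (n - card \<beta>) * G \<beta> = z ^ (n - r) * (z ^ (r - card \<beta>) * G \<beta>)"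
        by (simp add: power_add)
    qed
    finally show ?thesis by (simp add: sum_distrib_left)
  qed
  define \<Phi> where "\<Phi> = (\<lambda>z. a * (\<Sum>\<beta>\<in>P. z ^ (r - card \<beta>) * D \<beta>)
      - (\<Sum>\<beta>\<in>P. z ^ (r - card \<beta>) * E \<beta>) - z * (\<Sum>\<beta>\<in>P. z ^ (r - card \<beta>) * F \<beta>))"
  have "\<Phi> z = 0" if "z \<noteq> 0" for z
  proof -
    have expand: "(\<Sum>\<beta>\<in>Pow {0..<n}. z ^ (n - card \<beta>) * G \<beta>)
        = z ^ (n - r) * (\<Sum>\<beta>\<in>P. z ^ (r - card \<beta>) * G \<beta>)" if "G \<in> {D, E, F}" for G
      by (rule factor) (use vanish that in blast)
    have "z ^ (n - r) * \<Phi> z = 0"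
      using ident[of z] unfolding \<Phi>_def expand[of D, simplified] expand[of E, simplified]
        expand[of F, simplified]
      by (simp add: algebra_simps)
    then show ?thesis using that by simp
  qed
  moreover have "isCont \<Phi> 0" unfolding \<Phi>_def by (intro continuous_intros)
  ultimately have "\<Phi> 0 = 0" by (rule continuous_vanishing_off_point)
  moreover have "(\<Sum>\<beta>\<in>P. 0 ^ (r - card \<beta>) * G \<beta>) = (\<Sum>\<beta>\<in>J_set r n. G \<beta>)" for G :: "nat set \<Rightarrow> complex"
  proof -
    have "(\<Sum>\<beta>\<in>P. 0 ^ (r - card \<beta>) * G \<beta>) = (\<Sum>\<beta>\<in>P. if card \<beta> = r then G \<beta> else 0)"
      by (intro sum.cong refl) (auto simp: P_def)
    also have "\<dots> = (\<Sum>\<beta>\<in>{\<beta>\<in>P. card \<beta> = r}. G \<beta>)"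
      by (rule sum.inter_filter[OF finP, symmetric])
    also have "{\<beta>\<in>P. card \<beta> = r} = J_set r n" unfolding P_def J_set_def by auto
    finally show ?thesis .
  qed
  ultimately show ?thesis unfolding \<Phi>_def by simp
qed

definition principal_minors_vanish :: "nat \<Rightarrow> 'a::comm_ring_1 mat \<Rightarrow> bool" where
  "principal_minors_vanish r K \<longleftrightarrow>
     (\<forall>\<beta>. \<beta> \<subseteq> {0..<dim_row K} \<longrightarrow> r < card \<beta> \<longrightarrow> det (submatrix K \<beta> \<beta>) = 0)"

lemma cramer_principal_minors:
  fixes N :: "complex mat"
  assumes N: "N \<in> carrier_mat n n" and x: "x \<in> carrier_vec n" and i: "i < n" and rn: "r \<le> n"
    and van_N: "principal_minors_vanish r N"
    and van_Nx: "principal_minors_vanish r (replace_col N (N *\<^sub>v x) i)"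
    and van_x: "principal_minors_vanish r (replace_col N x i)"
  shows "x $ i * (\<Sum>\<beta>\<in>J_set r n. det (submatrix N \<beta> \<beta>))
    = (\<Sum>\<beta>\<in>J_set_i r n i. det (submatrix (replace_col N (N *\<^sub>v x) i) \<beta> \<beta>))"
proof -
  define E where "E = (\<lambda>\<beta>. if i \<in> \<beta> then det_on \<beta> (\<lambda>a b. if b = i then (N *\<^sub>v x) $ a else N $$ (a,b)) else 0)"
  define F where "F = (\<lambda>\<beta>. if i \<in> \<beta> then det_on \<beta> (\<lambda>a b. if b = i then x $ a else N $$ (a,b)) else 0)"
  have rows: "dim_row N = n" "dim_row (replace_col N y i) = n" for y
    using N replace_col_carrier[OF N] by auto
  have "x $ i * (\<Sum>\<beta>\<in>J_set r n. det_on \<beta> (\<lambda>a b. N $$ (a,b))) = (\<Sum>\<beta>\<in>J_set r n. E \<beta>)"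
  proof (rule lowest_order_terms_eq[OF rn])
    fix \<beta> :: "nat set" assume \<beta>: "\<beta> \<subseteq> {0..<n}" "r < card \<beta>"
    show "det_on \<beta> (\<lambda>a b. N $$ (a,b)) = 0 \<and> E \<beta> = 0 \<and> F \<beta> = 0"
      using van_N van_Nx van_x \<beta> unfolding principal_minors_vanish_def rows E_def F_def
      by (simp add: det_submatrix_eq_det_on[OF N] det_submatrix_replace_col[OF N])
  qed (unfold E_def F_def, rule cramer_add_scalar_diag[OF N x i])
  moreover have "(\<Sum>\<beta>\<in>J_set r n. E \<beta>)
      = (\<Sum>\<beta>\<in>J_set_i r n i. det (submatrix (replace_col N (N *\<^sub>v x) i) \<beta> \<beta>))"
  proof -
    have "(\<Sum>\<beta>\<in>J_set r n. E \<beta>) = (\<Sum>\<beta>\<in>J_set r n.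
        if i \<in> \<beta> then det (submatrix (replace_col N (N *\<^sub>v x) i) \<beta> \<beta>) else 0)"
      by (intro sum.cong refl) (auto simp: J_set_def E_def det_submatrix_replace_col[OF N])
    also have "\<dots> = (\<Sum>\<beta>\<in>J_set_i r n i. det (submatrix (replace_col N (N *\<^sub>v x) i) \<beta> \<beta>))"
      unfolding J_set_i_def by (rule sum.inter_filter[symmetric]) (simp add: J_set_def)
    finally show ?thesis .
  qed
  moreover have "(\<Sum>\<beta>\<in>J_set r n. det (submatrix N \<beta> \<beta>)) = (\<Sum>\<beta>\<in>J_set r n. det_on \<beta> (\<lambda>a b. N $$ (a,b)))"
    by (intro sum.cong refl) (auto simp: J_set_def det_submatrix_eq_det_on[OF N])
  ultimately show ?thesis by simp
qed

section \<open>Vanishing of principal minors beyond the rank\<close>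

lemma (in vec_space) rank_lt_card_imp_col_relation:
  assumes A: "A \<in> carrier_mat n nc" and S: "S \<subseteq> {0..<nc}" and c: "rank A < card S"
  shows "\<exists>w. (\<exists>j\<in>S. w j \<noteq> 0) \<and> (\<forall>p<n. (\<Sum>j\<in>S. A $$ (p,j) * w j) = 0)"
proof (cases "inj_on (col A) S")
  case False
  then obtain a b where ab: "a \<in> S" "b \<in> S" "a \<noteq> b" "col A a = col A b"
    unfolding inj_on_def by blast
  have fin: "finite S" using S finite_subset by blast
  define w where "w = (\<lambda>j. if j = a then 1 else if j = b then - 1 else (0::'a))"
  have "(\<Sum>j\<in>S. A $$ (p,j) * w j) = 0" if p: "p < n" for p
  proof -
    have "a < nc" "b < nc" using ab S by auto
    moreover have "col A a $ p = col A b $ p" using ab(4) by simp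
    ultimately have "A $$ (p,a) = A $$ (p,b)"
      using p A by (simp add: index_col)
    moreover have "(\<Sum>j\<in>S. A $$ (p,j) * w j) = (\<Sum>j\<in>{a,b}. A $$ (p,j) * w j)"
      by (rule sum.mono_neutral_right) (use fin ab in \<open>auto simp: w_def\<close>)
    moreover have "(\<Sum>j\<in>{a,b}. A $$ (p,j) * w j) = A $$ (p,a) - A $$ (p,b)"
      using ab(3) by (simp add: w_def)
    ultimately show ?thesis by simp
  qed
  moreover have "w a \<noteq> 0" using ab unfolding w_def by simp
  ultimately show ?thesis using ab by blast
next
  case True
  define V where "V = col A ` S"
  have fin: "finite S" using S finite_subset by blast
  have cV: "card V = card S" unfolding V_def using True by (rule card_image)
  have Vcols: "V \<subseteq> set (cols A)" unfolding V_def using S A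
    by (auto simp: cols_def)
  have Vcar: "V \<subseteq> carrier_vec n" unfolding V_def using A by auto
  have "\<not> lin_indpt V"
  proof
    assume "lin_indpt V"
    from rank_ge_card_indpt[OF A Vcols this] cV c show False by simp
  qed
  then obtain a v where av: "a \<in> V \<rightarrow> UNIV" "lincomb a V = 0\<^sub>v n" "v \<in> V" "a v \<noteq> 0"
    using finite_lin_dep[of V] fin Vcar unfolding V_def by auto
  define w where "w = (\<lambda>j. a (col A j))"
  have "(\<Sum>j\<in>S. A $$ (p,j) * w j) = 0" if p: "p < n" for p
  proof -
    have "0 = lincomb a V $ p" using av p by simp
    also have "\<dots> = (\<Sum>x\<in>V. a x * x $ p)" by (rule lincomb_index[OF p Vcar])
    also have "\<dots> = (\<Sum>j\<in>S. a (col A j) * col A j $ p)"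
      unfolding V_def by (rule sum.reindex[OF True, unfolded comp_def])
    also have "\<dots> = (\<Sum>j\<in>S. A $$ (p,j) * w j)"
      unfolding w_def using S A p by (intro sum.cong) (auto simp: mult.commute)
    finally show ?thesis by simp
  qed
  moreover obtain j where "j \<in> S" "v = col A j" using av(3) unfolding V_def by auto
  then have "\<exists>j\<in>S. w j \<noteq> 0" using av unfolding w_def by auto
  ultimately show ?thesis by blast
qed

lemma (in vec_space) exists_indep_cols_card_rank:
  assumes A: "A \<in> carrier_mat n nc"
  shows "\<exists>\<beta>. \<beta> \<subseteq> {0..<nc} \<and> card \<beta> = rank A \<and>
     (\<forall>w. (\<forall>p<n. (\<Sum>j\<in>\<beta>. A $$ (p,j) * w j) = 0) \<longrightarrow> (\<forall>j\<in>\<beta>. w j = 0))"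
proof -
  obtain S where S: "maximal S (\<lambda>T. T \<subseteq> set (cols A) \<and> lin_indpt T)"
    using maximal_exists[of "(\<lambda>T. T \<subseteq> set (cols A) \<and> lin_indpt T)" "card (set (cols A))" "{}"]
    by (meson List.finite_set card_mono empty_iff empty_subsetI finite_lin_indpt2 rev_finite_subset)
  have rk: "rank A = card S" by (rule rank_card_indpt[OF A S])
  have Ssub: "S \<subseteq> set (cols A)" and ind: "lin_indpt S" using S unfolding maximal_def by auto
  have finS: "finite S" using Ssub finite_subset by blast
  have Scar: "S \<subseteq> carrier_vec n" using Ssub A cols_dim by blast
  define f where "f = (\<lambda>v. SOME j. j < nc \<and> col A j = v)"
  have f: "f v < nc \<and> col A (f v) = v" if "v \<in> S" for v
  proof -
    from that Ssub obtain j where "j < length (cols A)" "cols A ! j = v"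
      by (metis in_set_conv_nth subsetD)
    then have "j < nc \<and> col A j = v" using A by auto
    then show ?thesis unfolding f_def by (rule someI)
  qed
  have inj: "inj_on f S" by (metis f inj_onI)
  define \<beta> where "\<beta> = f ` S"
  have bsub: "\<beta> \<subseteq> {0..<nc}" unfolding \<beta>_def using f by auto
  have cb: "card \<beta> = rank A" unfolding \<beta>_def rk using inj by (rule card_image)
  have "\<forall>j\<in>\<beta>. w j = 0" if w: "\<forall>p<n. (\<Sum>j\<in>\<beta>. A $$ (p,j) * w j) = 0" for w
  proof (rule ccontr)
    assume "\<not> (\<forall>j\<in>\<beta>. w j = 0)"
    then obtain v where v: "v \<in> S" "w (f v) \<noteq> 0" unfolding \<beta>_def by auto
    define a where "a = (\<lambda>u. w (f u))"
    have "lincomb a S = 0\<^sub>v n"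
    proof (rule eq_vecI)
      show "dim_vec (lincomb a S) = dim_vec (0\<^sub>v n)" using Scar by simp
      fix p assume "p < dim_vec (0\<^sub>v n)"
      then have p: "p < n" by simp
      have "lincomb a S $ p = (\<Sum>u\<in>S. a u * u $ p)" by (rule lincomb_index[OF p Scar])
      also have "\<dots> = (\<Sum>u\<in>S. A $$ (p, f u) * w (f u))"
        unfolding a_def using f A p by (intro sum.cong refl) (metis carrier_matD(1) col_def index_vec mult.commute)
      also have "\<dots> = (\<Sum>j\<in>\<beta>. A $$ (p,j) * w j)"
        unfolding \<beta>_def by (rule sum.reindex[OF inj, unfolded comp_def, symmetric])
      also have "\<dots> = 0" using w p by simp
      finally show "lincomb a S $ p = 0\<^sub>v n $ p" using p by simp
    qed
    then have "lin_dep S" using lin_dep_crit[OF finS subset_refl _ v(1)] v(2) unfolding a_def by auto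
    then show False using ind by simp
  qed
  then show ?thesis using bsub cb by blast
qed

lemma det_submatrix_eq_0_if_left_null:
  fixes K :: "'a::idom mat"
  assumes K: "K \<in> carrier_mat n n" and S: "S \<subseteq> {0..<n}"
    and w: "\<exists>j\<in>S. w j \<noteq> 0" and null: "\<forall>k\<in>S. (\<Sum>j\<in>S. w j * K $$ (j,k)) = 0"
  shows "det (submatrix K S S) = 0"
proof -
  define k where "k = card S"
  have ck: "card {i. i < n \<and> i \<in> S} = k" unfolding k_def by (rule card_less_and_mem[OF S])
  have dims: "dim_row K = n" "dim_col K = n" using K by auto
  have sub: "submatrix K S S \<in> carrier_mat k k"
    unfolding k_def by (rule submatrix_carrier_mat(2)[OF K S])
  have bij: "bij_betw (pick S) {0..<k} S"
    unfolding k_def by (rule bij_betw_pick[OF finite_subset[OF S finite_atLeastLessThan]])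
  define u where "u = vec k (\<lambda>l. w (pick S l))"
  have u: "u \<in> carrier_vec k" unfolding u_def by simp
  have "u \<noteq> 0\<^sub>v k"
  proof
    assume u0: "u = 0\<^sub>v k"
    from w obtain j where j: "j \<in> S" "w j \<noteq> 0" by blast
    then obtain l where l: "l < k" "pick S l = j" using bij unfolding bij_betw_def by force
    have "u $ l = w j" unfolding u_def using l by simp
    with u0 l j show False by simp
  qed
  moreover have "transpose_mat (submatrix K S S) *\<^sub>v u = 0\<^sub>v k"
  proof (rule eq_vecI)
    fix l assume "l < dim_vec (0\<^sub>v k)"
    then have l: "l < k" by simp
    then have pl: "pick S l \<in> S" using bij unfolding bij_betw_def by auto
    have "(transpose_mat (submatrix K S S) *\<^sub>v u) $ l
        = (\<Sum>l'\<in>{0..<k}. w (pick S l') * K $$ (pick S l', pick S l))"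
      using sub l u by (auto simp: scalar_prod_def u_def submatrix_index ck dims mult.commute
          intro!: sum.cong)
    also have "\<dots> = (\<Sum>j\<in>S. w j * K $$ (j, pick S l))"
      by (rule sum.reindex_bij_betw[OF bij])
    also have "\<dots> = 0" using null pl by simp
    finally show "(transpose_mat (submatrix K S S) *\<^sub>v u) $ l = 0\<^sub>v k $ l" using l by simp
  qed (use sub in simp)
  ultimately have "det (transpose_mat (submatrix K S S)) = 0"
    using det_0_iff_vec_prod_zero[of "transpose_mat (submatrix K S S)" k] sub u by auto
  then show ?thesis using det_transpose[OF sub] by simp
qed

definition orthogonal_to_kernel :: "complex mat \<Rightarrow> (nat \<Rightarrow> complex) \<Rightarrow> bool" where
  "orthogonal_to_kernel A y \<longleftrightarrow>
     (\<forall>v. (\<forall>p<dim_row A. (\<Sum>l<dim_col A. A $$ (p,l) * v l) = 0) \<longrightarrow>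
          (\<Sum>l<dim_col A. cnj (v l) * y l) = 0)"

lemma orthogonal_to_kernel_cong:
  assumes "\<And>l. l < dim_col A \<Longrightarrow> y l = y' l"
  shows "orthogonal_to_kernel A y \<longleftrightarrow> orthogonal_to_kernel A y'"
proof -
  have "(\<Sum>l<dim_col A. cnj (v l) * y l) = (\<Sum>l<dim_col A. cnj (v l) * y' l)" for v
    using assms by (intro sum.cong) auto
  then show ?thesis unfolding orthogonal_to_kernel_def by simp
qed

lemma orthogonal_to_kernel_replace_col:
  assumes N: "N \<in> carrier_mat n n" and A: "A \<in> carrier_mat m n"
    and orth_N: "\<And>k. k < n \<Longrightarrow> orthogonal_to_kernel A (\<lambda>l. N $$ (l,k))"
    and orth_y: "orthogonal_to_kernel A (\<lambda>l. y $ l)" and k: "k < n"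
  shows "orthogonal_to_kernel A (\<lambda>l. replace_col N y i $$ (l,k))"
proof -
  have "orthogonal_to_kernel A (\<lambda>l. replace_col N y i $$ (l,k))
      \<longleftrightarrow> orthogonal_to_kernel A (\<lambda>l. if k = i then y $ l else N $$ (l,k))"
    by (rule orthogonal_to_kernel_cong) (use A k in \<open>simp add: replace_col_index[OF N]\<close>)
  then show ?thesis using orth_N[OF k] orth_y by (cases "k = i") auto
qed

lemma principal_minors_vanish_if_orthogonal_to_kernel:
  assumes A: "A \<in> carrier_mat m n" and K: "K \<in> carrier_mat n n"
    and orth: "\<And>k. k < n \<Longrightarrow> orthogonal_to_kernel A (\<lambda>l. K $$ (l,k))"
  shows "principal_minors_vanish (vec_space.rank m A) K"
  unfolding principal_minors_vanish_def
proof (intro allI impI)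
  fix S assume "S \<subseteq> {0..<dim_row K}" and c: "vec_space.rank m A < card S"
  then have S: "S \<subseteq> {0..<n}" using K by simp
  obtain w where w: "\<exists>j\<in>S. w j \<noteq> 0" "\<forall>p<m. (\<Sum>j\<in>S. A $$ (p,j) * w j) = 0"
    using vec_space.rank_lt_card_imp_col_relation[OF A S c] by blast
  define v where "v = (\<lambda>l. if l \<in> S then w l else 0)"
  have restrict: "(\<Sum>l<n. f l (v l)) = (\<Sum>j\<in>S. f j (w j))" if "\<And>l. f l 0 = 0"
    for f :: "nat \<Rightarrow> complex \<Rightarrow> complex"
  proof -
    have "(\<Sum>l<n. f l (v l)) = (\<Sum>l\<in>S. f l (v l))"
      using S that by (intro sum.mono_neutral_right) (auto simp: v_def)
    then show ?thesis by (simp add: v_def)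
  qed
  have Av: "\<forall>p<dim_row A. (\<Sum>l<dim_col A. A $$ (p,l) * v l) = 0"
    using w(2) A restrict[of "\<lambda>l c. A $$ (p,l) * c" for p] by simp
  have "\<forall>k\<in>S. (\<Sum>j\<in>S. cnj (w j) * K $$ (j,k)) = 0"
  proof
    fix k assume "k \<in> S"
    then have "(\<Sum>l<n. cnj (v l) * K $$ (l,k)) = 0"
      using S orth[of k] Av A unfolding orthogonal_to_kernel_def by auto
    then show "(\<Sum>j\<in>S. cnj (w j) * K $$ (j,k)) = 0"
      using restrict[of "\<lambda>l c. cnj c * K $$ (l,k)"] by simp
  qed
  then show "det (submatrix K S S) = 0"
    using det_submatrix_eq_0_if_left_null[OF K S, of "\<lambda>j. cnj (w j)"] w(1) by auto
qed

section \<open>Gram matrices\<close>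

lemma mat_adjoint_carrier: "A \<in> carrier_mat m n \<Longrightarrow> mat_adjoint A \<in> carrier_mat n m"
  unfolding mat_adjoint_def by (auto simp: mat_of_rows_def)

lemma mat_adjoint_index: "(A :: complex mat) \<in> carrier_mat m n \<Longrightarrow> j < n \<Longrightarrow> p < m \<Longrightarrow> mat_adjoint A $$ (j,p) = cnj (A $$ (p,j))"
  unfolding mat_adjoint_def by (auto simp: mat_of_rows_def)

lemma adjoint_mult_index:
  assumes "(A :: complex mat) \<in> carrier_mat m n" "B \<in> carrier_mat m s" "j < n" "k < s"
  shows "(mat_adjoint A * B) $$ (j,k) = (\<Sum>p<m. cnj (A $$ (p,j)) * B $$ (p,k))"
  using assms mat_adjoint_carrier[OF assms(1)]
  by (auto simp: scalar_prod_def mat_adjoint_index atLeast0LessThan intro!: sum.cong)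

lemma orthogonal_to_kernel_adjoint_col:
  assumes A: "A \<in> carrier_mat m n" and B: "B \<in> carrier_mat m s" and k: "k < s"
  shows "orthogonal_to_kernel A (\<lambda>l. (mat_adjoint A * B) $$ (l,k))"
  unfolding orthogonal_to_kernel_def
proof (intro allI impI)
  fix v assume "\<forall>p<dim_row A. (\<Sum>l<dim_col A. A $$ (p,l) * v l) = 0"
  then have v: "\<forall>p<m. (\<Sum>l<n. A $$ (p,l) * v l) = 0" using A by simp
  have "(\<Sum>l<n. cnj (v l) * (mat_adjoint A * B) $$ (l,k))
      = (\<Sum>l<n. cnj (v l) * (\<Sum>p<m. cnj (A $$ (p,l)) * B $$ (p,k)))"
    by (intro sum.cong refl) (simp add: adjoint_mult_index[OF A B _ k])
  also have "\<dots> = (\<Sum>p<m. cnj (\<Sum>l<n. A $$ (p,l) * v l) * B $$ (p,k))"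
    by (simp add: sum_distrib_left sum_distrib_right cnj_sum sum.swap[of _ "{..<n}"]
        mult.commute mult.left_commute)
  also have "\<dots> = 0" using v by simp
  finally show "(\<Sum>l<dim_col A. cnj (v l) * (mat_adjoint A * B) $$ (l,k)) = 0" using A by simp
qed

lemma sum_cnj_gram_expand:
  fixes g :: "nat \<Rightarrow> nat \<Rightarrow> complex"
  shows "(\<Sum>a<k. cnj (v a) * (\<Sum>b<k. (\<Sum>p<m. cnj (g p a) * g p b) * v b))
       = (\<Sum>p<m. cnj (\<Sum>a<k. g p a * v a) * (\<Sum>b<k. g p b * v b))"
proof -
  have "(\<Sum>a<k. cnj (v a) * (\<Sum>b<k. (\<Sum>p<m. cnj (g p a) * g p b) * v b))
      = (\<Sum>a<k. \<Sum>b<k. \<Sum>p<m. cnj (v a) * cnj (g p a) * g p b * v b)"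
    by (simp add: sum_distrib_left sum_distrib_right mult.assoc)
  also have "\<dots> = (\<Sum>p<m. \<Sum>a<k. \<Sum>b<k. cnj (v a) * cnj (g p a) * g p b * v b)"
    by (simp add: sum.swap[of _ "{..<m}"])
  also have "\<dots> = (\<Sum>p<m. cnj (\<Sum>a<k. g p a * v a) * (\<Sum>b<k. g p b * v b))"
    by (simp add: cnj_sum sum_distrib_left sum_distrib_right mult.commute mult.left_commute)
  finally show ?thesis .
qed

lemma cnj_mult_self: "cnj z * z = complex_of_real ((cmod z)^2)"
  by (metis complex_mult_cnj complex_norm_square mult.commute)

lemma gram_quadratic_form:
  assumes G: "(G :: complex mat) \<in> carrier_mat m k" and v: "v \<in> carrier_vec k"
  shows "(\<Sum>a<k. cnj (v $ a) * ((mat_adjoint G * G) *\<^sub>v v) $ a)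
       = complex_of_real (\<Sum>p<m. (cmod ((G *\<^sub>v v) $ p))^2)"
proof -
  have H: "mat_adjoint G * G \<in> carrier_mat k k" using mat_adjoint_carrier[OF G] G by auto
  have "(\<Sum>a<k. cnj (v $ a) * ((mat_adjoint G * G) *\<^sub>v v) $ a)
     = (\<Sum>a<k. cnj (v $ a) * (\<Sum>b<k. (\<Sum>p<m. cnj (G $$ (p,a)) * G $$ (p,b)) * v $ b))"
  proof (rule sum.cong[OF refl])
    fix a assume a: "a \<in> {..<k}"
    have "((mat_adjoint G * G) *\<^sub>v v) $ a = row (mat_adjoint G * G) a \<bullet> v"
      by (rule index_mult_mat_vec) (use carrier_matD(1)[OF H] a in simp)
    also have "\<dots> = (\<Sum>b\<in>{0..<k}. (mat_adjoint G * G) $$ (a,b) * v $ b)"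
    proof -
      have "row (mat_adjoint G * G) a $ x = (mat_adjoint G * G) $$ (a,x)" if "x < k" for x
        by (rule index_row) (use carrier_matD[OF H] a that in auto)
      then show ?thesis using v unfolding scalar_prod_def by (intro sum.cong) auto
    qed
    also have "\<dots> = (\<Sum>b<k. (\<Sum>p<m. cnj (G $$ (p,a)) * G $$ (p,b)) * v $ b)"
      using a by (auto simp: atLeast0LessThan adjoint_mult_index[OF G G] intro!: sum.cong)
    finally show "cnj (v $ a) * ((mat_adjoint G * G) *\<^sub>v v) $ a = cnj (v $ a) * (\<Sum>b<k. (\<Sum>p<m. cnj (G $$ (p,a)) * G $$ (p,b)) * v $ b)" by simp
  qed
  also have "\<dots> = (\<Sum>p<m. cnj (\<Sum>a<k. G $$ (p,a) * v $ a) * (\<Sum>b<k. G $$ (p,b) * v $ b))"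
    by (rule sum_cnj_gram_expand)
  also have "\<dots> = (\<Sum>p<m. cnj ((G *\<^sub>v v) $ p) * (G *\<^sub>v v) $ p)"
    using G v by (intro sum.cong refl) (auto simp: scalar_prod_def atLeast0LessThan)
  also have "\<dots> = complex_of_real (\<Sum>p<m. (cmod ((G *\<^sub>v v) $ p))^2)"
    by (simp add: cnj_mult_self)
  finally show ?thesis .
qed

lemma det_gram_nonzero:
  assumes G: "(G :: complex mat) \<in> carrier_mat m k"
    and inj: "\<And>v. v \<in> carrier_vec k \<Longrightarrow> G *\<^sub>v v = 0\<^sub>v m \<Longrightarrow> v = 0\<^sub>v k"
  shows "det (mat_adjoint G * G) \<noteq> 0"
proof
  assume d: "det (mat_adjoint G * G) = 0"
  have H: "mat_adjoint G * G \<in> carrier_mat k k" using mat_adjoint_carrier[OF G] G by auto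
  obtain v where v: "v \<in> carrier_vec k" "v \<noteq> 0\<^sub>v k" "(mat_adjoint G * G) *\<^sub>v v = 0\<^sub>v k"
    using det_0_iff_vec_prod_zero[OF H] d by auto
  have "complex_of_real (\<Sum>p<m. (cmod ((G *\<^sub>v v) $ p))^2) = 0"
    unfolding gram_quadratic_form[OF G v(1), symmetric] using v(3) by simp
  then have "(\<Sum>p<m. (cmod ((G *\<^sub>v v) $ p))^2) = 0" using of_real_eq_0_iff by blast
  then have "\<forall>p\<in>{..<m}. (cmod ((G *\<^sub>v v) $ p))^2 = 0"
    by (subst sum_nonneg_eq_0_iff[symmetric]) auto
  then have "G *\<^sub>v v = 0\<^sub>v m" using G by (intro eq_vecI) auto
  with inj[OF v(1)] v(2) show False by simp
qed

lemma eigenvalue_gram_nonneg: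
  assumes G: "(G :: complex mat) \<in> carrier_mat m k" and ev: "eigenvalue (mat_adjoint G * G) a"
  shows "0 \<le> a"
proof -
  have H: "mat_adjoint G * G \<in> carrier_mat k k" using mat_adjoint_carrier[OF G] G by auto
  obtain v where v: "v \<in> carrier_vec k" "v \<noteq> 0\<^sub>v k" "(mat_adjoint G * G) *\<^sub>v v = a \<cdot>\<^sub>v v"
    using ev H unfolding eigenvalue_def eigenvector_def by auto
  have "(\<Sum>i<k. cnj (v $ i) * ((mat_adjoint G * G) *\<^sub>v v) $ i) = a * (\<Sum>i<k. cnj (v $ i) * v $ i)"
    using v by (simp add: sum_distrib_left mult.left_commute)
  also have "(\<Sum>i<k. cnj (v $ i) * v $ i) = complex_of_real (\<Sum>i<k. (cmod (v $ i))^2)"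
    by (simp add: cnj_mult_self)
  finally have eq: "a * complex_of_real (\<Sum>i<k. (cmod (v $ i))^2) = complex_of_real (\<Sum>p<m. (cmod ((G *\<^sub>v v) $ p))^2)"
    unfolding gram_quadratic_form[OF G v(1)] by simp
  define s where "s = (\<Sum>i<k. (cmod (v $ i))^2)"
  have "s \<noteq> 0"
  proof
    assume "s = 0"
    then have "\<forall>i\<in>{..<k}. (cmod (v $ i))^2 = 0" unfolding s_def
      by (subst sum_nonneg_eq_0_iff[symmetric]) auto
    then have "v = 0\<^sub>v k" using v(1) by (intro eq_vecI) auto
    with v(2) show False by simp
  qed
  moreover have "s \<ge> 0" unfolding s_def by (intro sum_nonneg) auto
  ultimately have spos: "s > 0" by simp
  have t: "(\<Sum>p<m. (cmod ((G *\<^sub>v v) $ p))^2) \<ge> 0" by (intro sum_nonneg) auto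
  from eq have "Re (a * complex_of_real s) = Re (complex_of_real (\<Sum>p<m. (cmod ((G *\<^sub>v v) $ p))^2))"
     "Im (a * complex_of_real s) = Im (complex_of_real (\<Sum>p<m. (cmod ((G *\<^sub>v v) $ p))^2))"
    unfolding s_def by simp_all
  then have "Re a * s = (\<Sum>p<m. (cmod ((G *\<^sub>v v) $ p))^2)" "Im a * s = 0" by simp_all
  then have "0 \<le> Re a * s" "Im a = 0" using t spos by simp_all
  then show ?thesis using spos
    by (auto simp: less_eq_complex_def zero_le_mult_iff)
qed

text \<open>On complex numbers 0 \<le> z means that z is real and nonnegative.\<close>

lemma det_gram_nonneg:
  assumes G: "(G :: complex mat) \<in> carrier_mat m k"
  shows "0 \<le> det (mat_adjoint G * G)"
proof -
  define H where "H = mat_adjoint G * G"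
  have H: "H \<in> carrier_mat k k" using mat_adjoint_carrier[OF G] G unfolding H_def by auto
  obtain as where cp: "char_poly H = (\<Prod>a\<leftarrow>as. [:- a, 1:])" and len: "length as = k"
    using char_poly_factorized[OF H] by auto
  have "poly (char_poly H) 0 = det (- char_matrix H 0)" by (rule char_poly_matrix[OF H])
  also have "- char_matrix H 0 = (-1) \<cdot>\<^sub>m H"
    using H by (intro eq_matI) (auto simp: char_matrix_def)
  also have "det \<dots> = (-1)^k * det H" using H by simp
  finally have e1: "poly (char_poly H) 0 = (-1)^k * det H" .
  have "poly (\<Prod>a\<leftarrow>as. [:- a, 1:]) 0 = (\<Prod>a\<leftarrow>as. - a)"
    by (induction as) auto
  also have "\<dots> = (-1)^length as * prod_list as"
    by (induction as) auto
  finally have e2: "poly (char_poly H) 0 = (-1)^k * prod_list as" using cp len by simp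
  have "det H = prod_list as" using e1 e2 by (metis minus_one_mult_self mult.assoc mult_1)
  moreover have "0 \<le> prod_list as"
  proof -
   have "0 \<le> a" if "a \<in> set as" for a
   proof -
    from that have "poly (char_poly H) a = 0" unfolding cp by (induction as) auto
    then have "eigenvalue H a" using eigenvalue_root_char_poly[OF H] by simp
    then show "0 \<le> a" using eigenvalue_gram_nonneg[OF G] unfolding H_def by simp
   qed
   moreover have "0 \<le> (1::complex)" by (simp add: less_eq_complex_def)
   ultimately show ?thesis by (induction as) (auto intro: mult_nonneg_nonneg)
  qed
  ultimately show ?thesis unfolding H_def by simp
qed

lemma submatrix_gram:
  assumes A: "(A::complex mat) \<in> carrier_mat m n" and S: "S \<subseteq> {0..<n}"
  shows "submatrix (mat_adjoint A * A) S S = mat_adjoint (submatrix A UNIV S) * submatrix A UNIV S"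
proof -
  define k where "k = card S"
  have ck: "card {i. i < n \<and> i \<in> S} = k" unfolding k_def by (rule card_less_and_mem[OF S])
  have G: "submatrix A UNIV S \<in> carrier_mat m k"
    unfolding k_def by (rule submatrix_carrier_mat(1)[OF A S])
  have N: "mat_adjoint A * A \<in> carrier_mat n n" using mat_adjoint_carrier[OF A] A by auto
  have fin: "finite S" using S finite_subset by blast
  have bij: "bij_betw (pick S) {0..<k} S" unfolding k_def by (rule bij_betw_pick[OF fin])
  have pk: "pick S a < n" if "a < k" for a
  proof -
    have "pick S a \<in> pick S ` {0..<k}" using that by auto
    also have "\<dots> = S" using bij unfolding bij_betw_def by auto
    finally show ?thesis using S by auto
  qed
  show ?thesis
  proof (rule eq_matI)
    fix a b assume ab: "a < dim_row (mat_adjoint (submatrix A UNIV S) * submatrix A UNIV S)"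
      "b < dim_col (mat_adjoint (submatrix A UNIV S) * submatrix A UNIV S)"
    then have a: "a < k" and b: "b < k" using G mat_adjoint_carrier[OF G] by auto
    have "submatrix (mat_adjoint A * A) S S $$ (a,b) = (mat_adjoint A * A) $$ (pick S a, pick S b)"
      using N a b ck by (subst submatrix_index) auto
    also have "\<dots> = (\<Sum>p<m. cnj (A $$ (p, pick S a)) * A $$ (p, pick S b))"
      by (rule adjoint_mult_index[OF A A pk[OF a] pk[OF b]])
    also have "\<dots> = (mat_adjoint (submatrix A UNIV S) * submatrix A UNIV S) $$ (a,b)"
      unfolding adjoint_mult_index[OF G G a b] using A ck a b
      by (intro sum.cong refl) (auto simp: submatrix_index pick_UNIV)
    finally show "submatrix (mat_adjoint A * A) S S $$ (a,b) = (mat_adjoint (submatrix A UNIV S) * submatrix A UNIV S) $$ (a,b)" .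
  qed (use G mat_adjoint_carrier[OF G] N ck in \<open>auto simp: dim_submatrix\<close>)
qed

lemma submatrix_kernel_trivial:
  assumes A: "(A::complex mat) \<in> carrier_mat m n" and S: "S \<subseteq> {0..<n}"
    and ind: "\<forall>w. (\<forall>p<m. (\<Sum>j\<in>S. A $$ (p,j) * w j) = 0) \<longrightarrow> (\<forall>j\<in>S. w j = 0)"
    and v: "v \<in> carrier_vec (card S)" and Gv: "submatrix A UNIV S *\<^sub>v v = 0\<^sub>v m"
  shows "v = 0\<^sub>v (card S)"
proof -
  define k where "k = card S"
  have ck: "card {i. i < n \<and> i \<in> S} = k" unfolding k_def by (rule card_less_and_mem[OF S])
  have G: "submatrix A UNIV S \<in> carrier_mat m k"
    unfolding k_def by (rule submatrix_carrier_mat(1)[OF A S])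
  have fin: "finite S" using S finite_subset by blast
  have bij: "bij_betw (pick S) {0..<k} S" unfolding k_def by (rule bij_betw_pick[OF fin])
  define w where "w = (\<lambda>a. v $ (inv_into {0..<k} (pick S) a))"
  have wp: "w (pick S l) = v $ l" if "l < k" for l
    unfolding w_def using bij_betw_inv_into_left[OF bij] that by simp
  have "(\<Sum>j\<in>S. A $$ (p,j) * w j) = 0" if p: "p < m" for p
  proof -
    have "(\<Sum>j\<in>S. A $$ (p,j) * w j) = (\<Sum>l\<in>{0..<k}. A $$ (p, pick S l) * w (pick S l))"
      by (rule sum.reindex_bij_betw[OF bij, symmetric])
    also have "\<dots> = (submatrix A UNIV S *\<^sub>v v) $ p"
      using G p v A ck unfolding k_def[symmetric]
      by (auto simp: scalar_prod_def wp submatrix_index pick_UNIV intro!: sum.cong)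
    also have "\<dots> = 0" using Gv p by simp
    finally show ?thesis .
  qed
  then have w0: "\<forall>j\<in>S. w j = 0" using ind by blast
  show ?thesis
  proof (rule eq_vecI)
    fix l assume "l < dim_vec (0\<^sub>v (card S))"
    then have l: "l < k" unfolding k_def by simp
    have "pick S l \<in> S" using bij l unfolding bij_betw_def by auto
    then show "v $ l = 0\<^sub>v (card S) $ l" using w0 wp[OF l] l unfolding k_def by simp
  qed (use v in simp)
qed

lemma det_principal_gram_nonneg:
  assumes A: "(A::complex mat) \<in> carrier_mat m n" and S: "S \<subseteq> {0..<n}"
  shows "0 \<le> det (submatrix (mat_adjoint A * A) S S)"
proof -
  have G: "submatrix A UNIV S \<in> carrier_mat m (card S)" by (rule submatrix_carrier_mat(1)[OF A S])
  show ?thesis unfolding submatrix_gram[OF A S] by (rule det_gram_nonneg[OF G])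
qed

lemma det_principal_gram_nonzero:
  assumes A: "(A::complex mat) \<in> carrier_mat m n" and S: "S \<subseteq> {0..<n}"
    and ind: "\<forall>w. (\<forall>p<m. (\<Sum>j\<in>S. A $$ (p,j) * w j) = 0) \<longrightarrow> (\<forall>j\<in>S. w j = 0)"
  shows "det (submatrix (mat_adjoint A * A) S S) \<noteq> 0"
proof -
  have G: "submatrix A UNIV S \<in> carrier_mat m (card S)" by (rule submatrix_carrier_mat(1)[OF A S])
  show ?thesis unfolding submatrix_gram[OF A S]
    by (rule det_gram_nonzero[OF G]) (rule submatrix_kernel_trivial[OF A S ind])
qed

lemma sum_principal_gram_minors_nonzero:
  assumes A: "(A::complex mat) \<in> carrier_mat m n"
  shows "(\<Sum>\<beta>\<in>J_set (vec_space.rank m A) n. det (submatrix (mat_adjoint A * A) \<beta> \<beta>)) \<noteq> 0"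
proof -
  obtain \<beta> where b: "\<beta> \<subseteq> {0..<n}" "card \<beta> = vec_space.rank m A"
    "\<forall>w. (\<forall>p<m. (\<Sum>j\<in>\<beta>. A $$ (p,j) * w j) = 0) \<longrightarrow> (\<forall>j\<in>\<beta>. w j = 0)"
    using vec_space.exists_indep_cols_card_rank[OF A] by blast
  have bJ: "\<beta> \<in> J_set (vec_space.rank m A) n" using b unfolding J_set_def by auto
  have fin: "finite (J_set (vec_space.rank m A) n)"
    by (rule finite_subset[of _ "Pow {0..<n}"]) (auto simp: J_set_def)
  have nn: "0 \<le> det (submatrix (mat_adjoint A * A) \<gamma> \<gamma>)" if "\<gamma> \<in> J_set (vec_space.rank m A) n" for \<gamma>
    using that det_principal_gram_nonneg[OF A] unfolding J_set_def by auto
  have nz: "det (submatrix (mat_adjoint A * A) \<beta> \<beta>) \<noteq> 0" by (rule det_principal_gram_nonzero[OF A b(1) b(3)])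
  have "det (submatrix (mat_adjoint A * A) \<beta> \<beta>) \<le> (\<Sum>\<beta>\<in>J_set (vec_space.rank m A) n. det (submatrix (mat_adjoint A * A) \<beta> \<beta>))"
    by (rule member_le_sum[OF bJ nn fin]) auto
  moreover have "0 < det (submatrix (mat_adjoint A * A) \<beta> \<beta>)" using nn[OF bJ] nz by (simp add: order_less_le)
  ultimately show ?thesis by auto
qed

section \<open>Minimum norm least squares solutions\<close>

lemma frob_norm_sq: "(frob_norm M)^2 = (\<Sum>i<dim_row M. \<Sum>j<dim_col M. (cmod (M $$ (i,j)))^2)"
  unfolding frob_norm_def by (simp add: sum_nonneg)

lemma frob_norm_le_imp_col_le:
  assumes M: "M \<in> carrier_mat a b" and M': "M' \<in> carrier_mat a b" and j: "j < b"
    and same: "\<And>i k. i < a \<Longrightarrow> k < b \<Longrightarrow> k \<noteq> j \<Longrightarrow> M' $$ (i,k) = M $$ (i,k)"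
    and le: "frob_norm M \<le> frob_norm M'"
  shows "(\<Sum>i<a. (cmod (M $$ (i,j)))^2) \<le> (\<Sum>i<a. (cmod (M' $$ (i,j)))^2)"
proof -
  have split: "(\<Sum>i<a. \<Sum>k<b. (cmod (Q $$ (i,k)))^2) = (\<Sum>i<a. (cmod (Q $$ (i,j)))^2) + (\<Sum>i<a. \<Sum>k\<in>{..<b}-{j}. (cmod (Q $$ (i,k)))^2)" for Q
  proof -
    have "(\<Sum>i<a. \<Sum>k<b. (cmod (Q $$ (i,k)))^2) = (\<Sum>i<a. (cmod (Q $$ (i,j)))^2 + (\<Sum>k\<in>{..<b}-{j}. (cmod (Q $$ (i,k)))^2))"
      using j by (intro sum.cong refl) (simp add: sum.remove[of "{..<b}" j])
    then show ?thesis by (simp add: sum.distrib)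
  qed
  have eq: "(\<Sum>i<a. \<Sum>k\<in>{..<b}-{j}. (cmod (M' $$ (i,k)))^2) = (\<Sum>i<a. \<Sum>k\<in>{..<b}-{j}. (cmod (M $$ (i,k)))^2)"
    using same by (intro sum.cong refl) auto
  have "0 \<le> frob_norm M" unfolding frob_norm_def by (simp add: sum_nonneg)
  then have "(frob_norm M)^2 \<le> (frob_norm M')^2"
    using le by (intro power_mono) auto
  then have "(\<Sum>i<a. \<Sum>k<b. (cmod (M $$ (i,k)))^2) \<le> (\<Sum>i<a. \<Sum>k<b. (cmod (M' $$ (i,k)))^2)"
    unfolding frob_norm_sq using M M' by simp
  then show ?thesis unfolding split eq by simp
qed

lemma cmod_add_sq: "(cmod (x + y))^2 = (cmod x)^2 + 2 * Re (cnj x * y) + (cmod y)^2"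
  unfolding cmod_power2 by (simp add: power2_sum algebra_simps)

lemma orthogonal_if_norm_minimal:
  fixes f g :: "nat \<Rightarrow> complex"
  assumes le: "\<And>t. (\<Sum>i<a. (cmod (f i))^2) \<le> (\<Sum>i<a. (cmod (f i + t * g i))^2)"
  shows "(\<Sum>i<a. cnj (g i) * f i) = 0"
proof -
  define \<alpha> where "\<alpha> = (\<Sum>i<a. cnj (g i) * f i)"
  define s where "s = (\<Sum>i<a. (cmod (g i))^2)"
  have s0: "s \<ge> 0" unfolding s_def by (intro sum_nonneg) auto
  define \<epsilon> where "\<epsilon> = 1 / (s + 1)"
  have e0: "\<epsilon> > 0" unfolding \<epsilon>_def using s0 by simp
  have es: "\<epsilon> * s < 1" unfolding \<epsilon>_def using s0 by (simp add: field_simps)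
  define t where "t = - complex_of_real \<epsilon> * \<alpha>"
  have "(\<Sum>i<a. (cmod (f i + t * g i))^2)
     = (\<Sum>i<a. (cmod (f i))^2 + 2 * Re (t * (cnj (f i) * g i)) + (cmod t)^2 * (cmod (g i))^2)"
    by (intro sum.cong refl) (simp add: cmod_add_sq norm_mult power_mult_distrib mult.left_commute)
  also have "\<dots> = (\<Sum>i<a. (cmod (f i))^2) + 2 * Re (t * (\<Sum>i<a. cnj (f i) * g i)) + (cmod t)^2 * s"
    unfolding s_def by (simp add: sum.distrib sum_distrib_left Re_sum)
  also have "(\<Sum>i<a. cnj (f i) * g i) = cnj \<alpha>"
    unfolding \<alpha>_def by (simp add: cnj_sum mult.commute)
  also have "Re (t * cnj \<alpha>) = - \<epsilon> * (cmod \<alpha>)^2"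
    unfolding t_def by (simp add: mult.assoc complex_mult_cnj cmod_power2)
  also have "(cmod t)^2 = \<epsilon>^2 * (cmod \<alpha>)^2"
    unfolding t_def using e0 by (simp add: norm_mult power_mult_distrib)
  finally have "(\<Sum>i<a. (cmod (f i + t * g i))^2) = (\<Sum>i<a. (cmod (f i))^2) + \<epsilon> * (cmod \<alpha>)^2 * (\<epsilon> * s - 2)"
    by (simp add: algebra_simps power2_eq_square)
  with le[of t] have "0 \<le> \<epsilon> * (cmod \<alpha>)^2 * (\<epsilon> * s - 2)" by simp
  moreover have "\<epsilon> * s - 2 < 0" using es by simp
  moreover have "\<epsilon> * (cmod \<alpha>)^2 \<ge> 0" using e0 by simp
  ultimately have "\<epsilon> * (cmod \<alpha>)^2 * (\<epsilon> * s - 2) = 0"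
    using mult_nonneg_nonpos[of "\<epsilon> * (cmod \<alpha>)^2" "\<epsilon> * s - 2"] by linarith
  then have "\<alpha> = 0" using e0 \<open>\<epsilon> * s - 2 < 0\<close> by simp
  then show ?thesis unfolding \<alpha>_def .
qed

lemma mult_minus_index:
  assumes A: "(A::complex mat) \<in> carrier_mat m n" and Y: "Y \<in> carrier_mat n s" and B: "B \<in> carrier_mat m s"
    and p: "p < m" and k: "k < s"
  shows "(A * Y - B) $$ (p,k) = (\<Sum>l<n. A $$ (p,l) * Y $$ (l,k)) - B $$ (p,k)"
  using A Y B p k by (auto simp: scalar_prod_def atLeast0LessThan intro!: sum.cong)

lemma min_norm_ls_residual_orthogonal:
  assumes A: "A \<in> carrier_mat m n" and B: "B \<in> carrier_mat m s" and X: "min_norm_ls A B X"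
    and j: "j < s" and l0: "l0 < n"
  shows "(\<Sum>p<m. cnj (A $$ (p,l0)) * ((\<Sum>l<n. A $$ (p,l) * X $$ (l,j)) - B $$ (p,j))) = 0"
proof -
  have Xc: "X \<in> carrier_mat n s" using X A B unfolding min_norm_ls_def by auto
  have opt: "\<And>Y. Y \<in> carrier_mat n s \<Longrightarrow> frob_norm (A * X - B) \<le> frob_norm (A * Y - B)"
    using X A B unfolding min_norm_ls_def by auto
  define r where "r = (\<lambda>p. (\<Sum>l<n. A $$ (p,l) * X $$ (l,j)) - B $$ (p,j))"
  have "(\<Sum>p<m. cnj (A $$ (p,l0)) * r p) = 0"
  proof (rule orthogonal_if_norm_minimal)
    fix t :: complex
    define Y where "Y = mat n s (\<lambda>(i,k). if i = l0 \<and> k = j then X $$ (i,k) + t else X $$ (i,k))"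
    have Yc: "Y \<in> carrier_mat n s" unfolding Y_def by simp
    have 1: "A * X - B \<in> carrier_mat m s" "A * Y - B \<in> carrier_mat m s" using A B Xc Yc by auto
    have same: "(A * Y - B) $$ (p,k) = (A * X - B) $$ (p,k)" if "p < m" "k < s" "k \<noteq> j" for p k
      unfolding mult_minus_index[OF A Yc B that(1,2)] mult_minus_index[OF A Xc B that(1,2)]
      using that by (auto simp: Y_def intro!: sum.cong)
    have colY: "(A * Y - B) $$ (p,j) = r p + t * A $$ (p,l0)" if "p < m" for p
    proof -
      have "(\<Sum>l<n. A $$ (p,l) * Y $$ (l,j)) = (\<Sum>l<n. A $$ (p,l) * X $$ (l,j) + (if l = l0 then A $$ (p,l0) * t else 0))"
        using j by (intro sum.cong refl) (auto simp: Y_def algebra_simps)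
      also have "\<dots> = (\<Sum>l<n. A $$ (p,l) * X $$ (l,j)) + A $$ (p,l0) * t"
        using l0 by (simp add: sum.distrib)
      finally show ?thesis unfolding mult_minus_index[OF A Yc B that j] r_def by (simp add: algebra_simps)
    qed
    have colX: "(A * X - B) $$ (p,j) = r p" if "p < m" for p
      unfolding mult_minus_index[OF A Xc B that j] r_def ..
    from frob_norm_le_imp_col_le[OF 1 j same opt[OF Yc]]
    show "(\<Sum>p<m. (cmod (r p))^2) \<le> (\<Sum>p<m. (cmod (r p + t * A $$ (p,l0)))^2)"
      using colX colY by simp
  qed
  then show ?thesis unfolding r_def .
qed

lemma min_norm_ls_col_orthogonal_to_kernel:
  assumes A: "A \<in> carrier_mat m n" and B: "B \<in> carrier_mat m s" and X: "min_norm_ls A B X"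
    and j: "j < s"
  shows "orthogonal_to_kernel A (\<lambda>l. X $$ (l,j))"
  unfolding orthogonal_to_kernel_def
proof (intro allI impI)
  fix v assume "\<forall>p<dim_row A. (\<Sum>l<dim_col A. A $$ (p,l) * v l) = 0"
  then have v: "\<forall>p<m. (\<Sum>l<n. A $$ (p,l) * v l) = 0" using A by simp
  have Xc: "X \<in> carrier_mat n s" using X A B unfolding min_norm_ls_def by auto
  have minimal: "frob_norm X \<le> frob_norm Y"
    if "Y \<in> carrier_mat n s" "frob_norm (A * Y - B) = frob_norm (A * X - B)" for Y
    using X A B that unfolding min_norm_ls_def by auto
  have "(\<Sum>i<n. cnj (v i) * X $$ (i,j)) = 0"
  proof (rule orthogonal_if_norm_minimal)
    fix t :: complex
    \<comment> \<open>moving column j along the kernel vector v does not change the residual\<close>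
    define Y where "Y = mat n s (\<lambda>(i,k). if k = j then X $$ (i,k) + t * v i else X $$ (i,k))"
    have Yc: "Y \<in> carrier_mat n s" unfolding Y_def by simp
    have "A * Y - B = A * X - B"
    proof (rule eq_matI)
      fix p k assume "p < dim_row (A * X - B)" "k < dim_col (A * X - B)"
      then have p: "p < m" and k: "k < s" using A B Xc by auto
      have "(\<Sum>l<n. A $$ (p,l) * Y $$ (l,k)) = (\<Sum>l<n. A $$ (p,l) * X $$ (l,k))
          + (if k = j then t * (\<Sum>l<n. A $$ (p,l) * v l) else 0)"
        using k by (auto simp: Y_def algebra_simps sum.distrib sum_distrib_left intro!: sum.cong)
      also have "\<dots> = (\<Sum>l<n. A $$ (p,l) * X $$ (l,k))" using v p by simp
      finally show "(A * Y - B) $$ (p,k) = (A * X - B) $$ (p,k)"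
        unfolding mult_minus_index[OF A Yc B p k] mult_minus_index[OF A Xc B p k] by simp
    qed (use A B Xc Yc in auto)
    then have "frob_norm X \<le> frob_norm Y" using minimal[OF Yc] by simp
    moreover have "Y $$ (i,k) = X $$ (i,k)" if "i < n" "k < s" "k \<noteq> j" for i k
      using that by (simp add: Y_def)
    ultimately show "(\<Sum>i<n. (cmod (X $$ (i,j)))^2) \<le> (\<Sum>i<n. (cmod (X $$ (i,j) + t * v i))^2)"
      using frob_norm_le_imp_col_le[OF Xc Yc j] j by (simp add: Y_def)
  qed
  then show "(\<Sum>l<dim_col A. cnj (v l) * X $$ (l,j)) = 0" using A by simp
qed

lemma min_norm_ls_normal_equation:
  assumes A: "A \<in> carrier_mat m n" and B: "B \<in> carrier_mat m s" and X: "min_norm_ls A B X"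
  shows "mat_adjoint A * A * X = mat_adjoint A * B"
proof (rule eq_matI)
  have Xc: "X \<in> carrier_mat n s" using X A B unfolding min_norm_ls_def by auto
  have N: "mat_adjoint A * A \<in> carrier_mat n n" using mat_adjoint_carrier[OF A] A by auto
  fix a j assume "a < dim_row (mat_adjoint A * B)" "j < dim_col (mat_adjoint A * B)"
  then have a: "a < n" and j: "j < s" using mat_adjoint_carrier[OF A] B by auto
  have "(mat_adjoint A * A * X) $$ (a,j) = (\<Sum>k<n. (mat_adjoint A * A) $$ (a,k) * X $$ (k,j))"
  proof -
    have "row (mat_adjoint A * A) a $ k = (mat_adjoint A * A) $$ (a,k)" if "k < n" for k
      by (rule index_row) (use carrier_matD[OF N] a that in auto)
    then show ?thesis
      using carrier_matD[OF N] carrier_matD[OF Xc] a j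
      by (simp add: scalar_prod_def atLeast0LessThan)
  qed
  also have "\<dots> = (\<Sum>k<n. \<Sum>p<m. cnj (A $$ (p,a)) * A $$ (p,k) * X $$ (k,j))"
    by (auto simp: adjoint_mult_index[OF A A a] sum_distrib_right intro!: sum.cong)
  also have "\<dots> = (\<Sum>p<m. cnj (A $$ (p,a)) * (\<Sum>l<n. A $$ (p,l) * X $$ (l,j)))"
    by (simp add: sum.swap[of _ "{..<n}"] sum_distrib_left mult.assoc)
  also have "\<dots> = (\<Sum>p<m. cnj (A $$ (p,a)) * B $$ (p,j))"
    using min_norm_ls_residual_orthogonal[OF A B X j a]
    by (simp add: right_diff_distrib sum_subtractf)
  also have "\<dots> = (mat_adjoint A * B) $$ (a,j)"
    by (rule adjoint_mult_index[OF A B a j, symmetric])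
  finally show "(mat_adjoint A * A * X) $$ (a,j) = (mat_adjoint A * B) $$ (a,j)" .
qed (use mat_adjoint_carrier[OF A] A B X in \<open>auto simp: min_norm_ls_def\<close>)

lemma min_norm_ls_entry_formula:
  assumes A: "A \<in> carrier_mat m n" and B: "B \<in> carrier_mat m s" and X: "min_norm_ls A B X"
    and i: "i < n" and j: "j < s"
  shows "X $$ (i,j) =
     (\<Sum>\<beta>\<in>J_set_i (vec_space.rank m A) n i.
        det (submatrix (replace_col (mat_adjoint A * A) (col (mat_adjoint A * B) j) i) \<beta> \<beta>))
     / (\<Sum>\<beta>\<in>J_set (vec_space.rank m A) n. det (submatrix (mat_adjoint A * A) \<beta> \<beta>))"
proof -
  define N where "N = mat_adjoint A * A"
  define x where "x = col X j"
  have N: "N \<in> carrier_mat n n" unfolding N_def using mat_adjoint_carrier[OF A] A by auto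
  have Xc: "X \<in> carrier_mat n s" using X A B unfolding min_norm_ls_def by auto
  have x: "x \<in> carrier_vec n" unfolding x_def using Xc j by auto
  have Nx: "N *\<^sub>v x = col (mat_adjoint A * B) j"
    unfolding N_def x_def min_norm_ls_normal_equation[OF A B X, symmetric]
    using col_mult2[OF _ Xc j] N N_def by simp
  have orth_N: "orthogonal_to_kernel A (\<lambda>l. N $$ (l,k))" if "k < n" for k
    unfolding N_def by (rule orthogonal_to_kernel_adjoint_col[OF A A that])
  have "orthogonal_to_kernel A (\<lambda>l. (mat_adjoint A * B) $$ (l,j))"
    by (rule orthogonal_to_kernel_adjoint_col[OF A B j])
  then have orth_Nx: "orthogonal_to_kernel A (\<lambda>l. (N *\<^sub>v x) $ l)"
    by (subst orthogonal_to_kernel_cong[of A _ "\<lambda>l. (mat_adjoint A * B) $$ (l,j)"])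
      (use A B j mat_adjoint_carrier[OF A] in \<open>auto simp: Nx\<close>)
  have "orthogonal_to_kernel A (\<lambda>l. X $$ (l,j))"
    by (rule min_norm_ls_col_orthogonal_to_kernel[OF A B X j])
  then have orth_x: "orthogonal_to_kernel A (\<lambda>l. x $ l)"
    by (subst orthogonal_to_kernel_cong[of A _ "\<lambda>l. X $$ (l,j)"]) (use A Xc j in \<open>auto simp: x_def\<close>)
  have "X $$ (i,j) * (\<Sum>\<beta>\<in>J_set (vec_space.rank m A) n. det (submatrix N \<beta> \<beta>))
      = (\<Sum>\<beta>\<in>J_set_i (vec_space.rank m A) n i. det (submatrix (replace_col N (N *\<^sub>v x) i) \<beta> \<beta>))"
    using cramer_principal_minors[OF N x i vec_space.rank_le_nc[OF A]]
      principal_minors_vanish_if_orthogonal_to_kernel[OF A] N replace_col_carrier[OF N]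
      orth_N orthogonal_to_kernel_replace_col[OF N A orth_N] orth_Nx orth_x
      x_def Xc i j
    by auto
  moreover have "(\<Sum>\<beta>\<in>J_set (vec_space.rank m A) n. det (submatrix N \<beta> \<beta>)) \<noteq> 0"
    unfolding N_def by (rule sum_principal_gram_minors_nonzero[OF A])
  ultimately show ?thesis using Nx unfolding N_def by (simp add: eq_divide_eq)
qed

lemma J_set_self: "J_set n n = {{0..<n}}"
proof
  show "J_set n n \<subseteq> {{0..<n}}"
  proof
    fix \<beta> assume "\<beta> \<in> J_set n n"
    then have "\<beta> \<subseteq> {0..<n}" "card \<beta> = card {0..<n}" unfolding J_set_def by auto
    then show "\<beta> \<in> {{0..<n}}" using card_subset_eq by blast
  qed
qed (auto simp: J_set_def)

lemma J_set_i_self: "i < n \<Longrightarrow> J_set_i n n i = {{0..<n}}"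
  unfolding J_set_i_def J_set_self by auto

lemma det_submatrix_all: "K \<in> carrier_mat n n \<Longrightarrow> det (submatrix K {0..<n} {0..<n}) = det K"
  using det_submatrix_eq_det_on[of K n "{0..<n}"] det_eq_det_on[of K n] by simp

theorem theorem4p1:
  fixes A B X :: "complex mat" and m n s r :: nat
  assumes A: "A \<in> carrier_mat m n"
    and B: "B \<in> carrier_mat m s"
    and X: "min_norm_ls A B X"
  shows
   "(vec_space.rank m A = r \<and> r \<le> m \<and> m < n \<longrightarrow>
      (\<forall>i<n. \<forall>j<s.
         X $$ (i,j) =
           (\<Sum>\<beta>\<in>J_set_i r n i.
              det (submatrix (replace_col (mat_adjoint A * A) (col (mat_adjoint A * B) j) i) \<beta> \<beta>))
           / (\<Sum>\<beta>\<in>J_set r n. det (submatrix (mat_adjoint A * A) \<beta> \<beta>))))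
    \<and>
    (vec_space.rank m A = n \<longrightarrow>
      (\<forall>i<n. \<forall>j<s.
         X $$ (i,j) =
           det (replace_col (mat_adjoint A * A) (col (mat_adjoint A * B) j) i)
           / det (mat_adjoint A * A)))"
proof (intro conjI impI allI)
  fix i j assume "vec_space.rank m A = r \<and> r \<le> m \<and> m < n" "i < n" "j < s"
  then show "X $$ (i,j) =
      (\<Sum>\<beta>\<in>J_set_i r n i.
         det (submatrix (replace_col (mat_adjoint A * A) (col (mat_adjoint A * B) j) i) \<beta> \<beta>))
      / (\<Sum>\<beta>\<in>J_set r n. det (submatrix (mat_adjoint A * A) \<beta> \<beta>))"
    using min_norm_ls_entry_formula[OF A B X] by auto
next
  fix i j assume rank: "vec_space.rank m A = n" and i: "i < n" and j: "j < s"
  have N: "mat_adjoint A * A \<in> carrier_mat n n" using mat_adjoint_carrier[OF A] A by auto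
  show "X $$ (i,j) = det (replace_col (mat_adjoint A * A) (col (mat_adjoint A * B) j) i)
      / det (mat_adjoint A * A)"
    using min_norm_ls_entry_formula[OF A B X i j]
    unfolding rank J_set_self J_set_i_self[OF i]
    by (simp add: det_submatrix_all[OF N] det_submatrix_all[OF replace_col_carrier[OF N]])
qed

end
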